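(* Let $\mathbb{F}_q$ have characteristic $p\neq 2$, let $f(X)=aX^2+c\in\mathbb{F}_q[X]$ with $a\neq0$, let $r\ge 1$, and suppose $f^i(0)\neq f^j(0)$ for all $0\le i<j\le r$. Then for every $0\le j\le r-1$, writing $D=2^j$ and $F^j(U,W)=W^Df^j(U/W)$, the gradient of the form $F^j(U,W)+F^j(V,W)$ vanishes at no point $(u,v,w)\neq(0,0,0)$ of $\overline{\mathbb{F}_q}^{\,3}$; consequently the polynomial $f^j(X)+f^j(Y)$ is absolutely irreducible (irreducible over $\overline{\mathbb{F}_q}$).
   Context: The iterates are $f^0(X)=X$, $f^{j+1}(X)=f(f^j(X))$; $\overline{\mathbb{F}_q}$ is an algebraic closure of $\mathbb{F}_q$. *)

theory Defs
  imports "HOL-Algebra.Algebraic_Closure_Type"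
begin

definition iter_poly :: "'a::comm_ring_1 poly \<Rightarrow> nat \<Rightarrow> 'a poly" where
  "iter_poly f j = ((\<lambda>g. pcompose f g) ^^ j) [:0, 1:]"

text \<open>Bivariate polynomials in U, W are represented as 'a poly poly:
  the inner variable is U, the outer variable is W.
  Homogenisation F(U,W) = W^D p(U/W) = sum_k coeff p k U^k W^(D-k).\<close>
definition homog :: "nat \<Rightarrow> 'a::comm_ring_1 poly \<Rightarrow> 'a poly poly" where
  "homog D p = (\<Sum>k\<le>D. monom (monom (coeff p k) k) (D - k))"

text \<open>Trivariate polynomials in U, V, W are represented as 'a poly poly poly:
  innermost variable U, middle variable V, outer variable W.\<close>
definition lift_UW :: "'a::comm_ring_1 poly poly \<Rightarrow> 'a poly poly poly" where
  "lift_UW P = map_poly (\<lambda>q. [:q:]) P"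

definition lift_VW :: "'a::comm_ring_1 poly poly \<Rightarrow> 'a poly poly poly" where
  "lift_VW P = map_poly (map_poly (\<lambda>c. [:c:])) P"

definition eval3 :: "'a::comm_ring_1 poly poly poly \<Rightarrow> 'a \<Rightarrow> 'a \<Rightarrow> 'a \<Rightarrow> 'a" where
  "eval3 G u v w = poly (map_poly (\<lambda>Q. poly (map_poly (\<lambda>q. poly q u) Q) v) G) w"

definition dU :: "'a::idom poly poly poly \<Rightarrow> 'a poly poly poly" where
  "dU G = map_poly (map_poly pderiv) G"
definition dV :: "'a::idom poly poly poly \<Rightarrow> 'a poly poly poly" where
  "dV G = map_poly pderiv G"
definition dW :: "'a::idom poly poly poly \<Rightarrow> 'a poly poly poly" where
  "dW G = pderiv G"

definition sum_form :: "nat \<Rightarrow> 'a::comm_ring_1 poly \<Rightarrow> 'a poly poly poly" where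
  "sum_form D p = lift_UW (homog D p) + lift_VW (homog D p)"

text \<open>Bivariate p(X) + p(Y) as 'a poly poly (inner variable X, outer Y).\<close>
definition biv_sum :: "'a::comm_ring_1 poly \<Rightarrow> 'a poly poly" where
  "biv_sum p = [:p:] + map_poly (\<lambda>c. [:c:]) p"

end

theory Submission
  imports Defs "HOL-Computational_Algebra.Polynomial_Factorial"
begin

text \<open>Since \<open>(f\<^sup>j\<^sup>+\<^sup>1)' = 2a f\<^sup>j (f\<^sup>j)'\<close>,
  every critical point of \<open>f\<^sup>j\<close> is a zero of some \<open>f\<^sup>i\<close> with \<open>i < j\<close>, so every critical value of \<open>f\<^sup>j\<close>
  is some \<open>f\<^sup>m(0)\<close> with \<open>1 \<le> m \<le> j\<close>. Because \<open>f(y) = f(-y)\<close>, a relation \<open>f\<^sup>m(0) = -f\<^sup>n(0)\<close>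
  would produce a collision in the orbit of \<open>0\<close>; hence no two critical values of \<open>f\<^sup>j\<close> add up to \<open>0\<close>.

  A singular point of \<open>F\<^sup>j(U,W) + F\<^sup>j(V,W)\<close> cannot lie on \<open>W = 0\<close>, as \<open>\<partial>F\<^sup>j/\<partial>U\<close> restricts there to a
  nonzero multiple of \<open>U\<^sup>D\<^sup>-\<^sup>1\<close>; off \<open>W = 0\<close> it dehomogenizes to critical points \<open>x, y\<close> of \<open>f\<^sup>j\<close>,
  and by Euler's identity \<open>\<partial>/\<partial>W\<close> vanishes only if \<open>f\<^sup>j(x) + f\<^sup>j(y) = 0\<close>.

  Irreducibility of \<open>f\<^sup>j(X) + f\<^sup>k(Y)\<close> follows by induction on \<open>k \<le> j\<close>, using
  \<open>f\<^sup>k\<^sup>+\<^sup>1(Y) = f\<^sup>k(aY\<^sup>2 + c)\<close> and the fact that substituting \<open>aY\<^sup>2 + c\<close> into an irreducible \<open>Q(Y)\<close> keeps it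
  irreducible unless \<open>Q(c)\<close> is a constant times a square. Here \<open>Q(c) = f\<^sup>j(X) + f\<^sup>k\<^sup>+\<^sup>1(0)\<close>, whose
  multiple roots would be critical points of \<open>f\<^sup>j\<close> with critical value \<open>-f\<^sup>k\<^sup>+\<^sup>1(0)\<close>.\<close>

lemma map_poly_add:
  assumes "f 0 = 0" "\<And>x y. f (x + y) = f x + f y"
  shows "map_poly f (p + q) = map_poly f p + map_poly f q"
  by (rule poly_eqI) (simp add: coeff_map_poly assms)

lemma map_poly_sum:
  assumes "f 0 = 0" "\<And>x y. f (x + y) = f x + f y"
  shows "map_poly f (sum g A) = (\<Sum>x\<in>A. map_poly f (g x))"
  by (induction A rule: infinite_finite_induct) (simp_all add: map_poly_add assms)

lemma map_poly_mult:
  fixes f :: "'a::comm_ring_1 \<Rightarrow> 'b::comm_ring_1"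
  assumes "f 0 = 0" "\<And>x y. f (x + y) = f x + f y" "\<And>x y. f (x * y) = f x * f y"
  shows "map_poly f (p * q) = map_poly f p * map_poly f q"
  by (induction p) (simp_all add: map_poly_add map_poly_smult map_poly_pCons assms)

lemma map_poly_pcompose:
  fixes f :: "'a::comm_ring_1 \<Rightarrow> 'b::comm_ring_1"
  assumes "f 0 = 0" "\<And>x y. f (x + y) = f x + f y" "\<And>x y. f (x * y) = f x * f y"
  shows "map_poly f (pcompose p q) = pcompose (map_poly f p) (map_poly f q)"
  by (induction p) (simp_all add: pcompose_pCons map_poly_add map_poly_mult map_poly_pCons assms)

lemma poly_map_poly_hom:
  fixes f :: "'a::comm_ring_1 \<Rightarrow> 'b::comm_ring_1"
  assumes "f 0 = 0" "\<And>x y. f (x + y) = f x + f y" "\<And>x y. f (x * y) = f x * f y"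
  shows "poly (map_poly f p) (f x) = f (poly p x)"
  by (induction p) (simp_all add: map_poly_pCons assms)

lemma pderiv_map_poly:
  assumes "f 0 = 0" "\<And>n x. f (of_nat n * x) = of_nat n * f x"
  shows "pderiv (map_poly f p) = map_poly f (pderiv p)"
  by (rule poly_eqI) (simp add: coeff_map_poly coeff_pderiv assms del: of_nat_Suc)

lemma pderiv_sum: "pderiv (sum g A) = (\<Sum>x\<in>A. pderiv (g x))"
  by (induction A rule: infinite_finite_induct) (simp_all add: pderiv_add)

section \<open>Iterates of a quadratic polynomial\<close>

lemma iter_poly_0 [simp]: "iter_poly f 0 = [:0, 1:]"
  by (simp add: iter_poly_def)

lemma iter_poly_Suc: "iter_poly f (Suc j) = pcompose f (iter_poly f j)"
  by (simp add: iter_poly_def)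

lemma iter_poly_Suc_right: "iter_poly f (Suc j) = pcompose (iter_poly f j) f"
  by (induction j) (simp_all add: iter_poly_Suc pcompose_pCons pcompose_assoc)

lemma poly_iter_poly: "poly (iter_poly f j) x = (poly f ^^ j) x"
  by (induction j) (simp_all add: iter_poly_Suc poly_pcompose)

lemma poly_iter_poly_add:
  "poly (iter_poly f (m + i)) x = poly (iter_poly f m) (poly (iter_poly f i) x)"
  by (simp add: poly_iter_poly funpow_add)

lemma degree_iter_poly: "degree (iter_poly (f :: 'a::idom poly) j) = degree f ^ j"
  by (induction j) (simp_all add: iter_poly_Suc degree_pcompose)

lemma degree_iter_poly_quadratic:
  fixes a c :: "'a::idom"
  assumes "a \<noteq> 0"
  shows "degree (iter_poly [:c, 0, a:] j) = 2 ^ j"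
  using assms by (simp add: degree_iter_poly numeral_2_eq_2)

lemma map_poly_iter_poly:
  fixes h :: "'a::comm_ring_1 \<Rightarrow> 'b::comm_ring_1"
  assumes "h 0 = 0" "h 1 = 1" "\<And>x y. h (x + y) = h x + h y" "\<And>x y. h (x * y) = h x * h y"
  shows "map_poly h (iter_poly f j) = iter_poly (map_poly h f) j"
  by (induction j) (simp_all add: iter_poly_Suc map_poly_pcompose map_poly_pCons assms)

lemma critical_value_iter_poly:
  fixes a c x :: "'k::field"
  assumes "a \<noteq> 0" "(2::'k) \<noteq> 0" and "poly (pderiv (iter_poly [:c, 0, a:] j)) x = 0"
  shows "\<exists>m. 1 \<le> m \<and> m \<le> j \<and> poly (iter_poly [:c, 0, a:] j) x = poly (iter_poly [:c, 0, a:] m) 0"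
proof -
  have "\<exists>i<j. poly (iter_poly [:c, 0, a:] i) x = 0"
    using assms(3)
  proof (induction j)
    case (Suc j)
    have "poly (pderiv (iter_poly [:c, 0, a:] (Suc j))) x
        = 2 * a * poly (iter_poly [:c, 0, a:] j) x * poly (pderiv (iter_poly [:c, 0, a:] j)) x"
      by (simp add: iter_poly_Suc pderiv_pcompose pderiv_pCons poly_pcompose algebra_simps)
    with Suc.prems assms(1,2) Suc.IH show ?case
      by (auto intro: less_SucI)
  qed (simp add: pderiv_pCons)
  then obtain i where "i < j" "poly (iter_poly [:c, 0, a:] i) x = 0"
    by blast
  then show ?thesis
    using poly_iter_poly_add[of _ "j - i" i x] by (intro exI[of _ "j - i"]) auto
qed

locale quadratic_orbit =
  fixes a c :: "'k::field" and r :: nat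
  assumes a_nonzero: "a \<noteq> 0" and two_nonzero: "(2::'k) \<noteq> 0"
    and orbit_injective: "\<And>i j. i < j \<Longrightarrow> j \<le> r \<Longrightarrow>
      poly (iter_poly [:c, 0, a:] i) 0 \<noteq> poly (iter_poly [:c, 0, a:] j) 0"
begin

abbreviation orbit :: "nat \<Rightarrow> 'k" where
  "orbit i \<equiv> poly (iter_poly [:c, 0, a:] i) 0"

lemma orbit_Suc: "orbit (Suc i) = c + a * orbit i ^ 2"
  by (simp add: poly_iter_poly power2_eq_square algebra_simps)

lemma orbit_add_nonzero:
  assumes "1 \<le> m" "1 \<le> n" "m < r" "n < r"
  shows "orbit m + orbit n \<noteq> 0"
proof
  assume sum0: "orbit m + orbit n = 0"
  show False
  proof (cases "m = n")
    case True
    with sum0 two_nonzero have "orbit m = orbit 0"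
      by (simp flip: mult_2)
    with orbit_injective[of 0 m] assms show False
      by simp
  next
    case False
    from sum0 have "orbit (Suc m) = orbit (Suc n)"
      by (simp add: orbit_Suc eq_neg_iff_add_eq_0 [symmetric])
    with orbit_injective[of "Suc m" "Suc n"] orbit_injective[of "Suc n" "Suc m"] False assms
    show False
      by (cases "m < n") auto
  qed
qed

lemma critical_values_add_nonzero:
  assumes "j < r" "poly (pderiv (iter_poly [:c, 0, a:] j)) x = 0"
    "poly (pderiv (iter_poly [:c, 0, a:] j)) y = 0"
  shows "poly (iter_poly [:c, 0, a:] j) x + poly (iter_poly [:c, 0, a:] j) y \<noteq> 0"
  using critical_value_iter_poly[OF a_nonzero two_nonzero assms(2)]
    critical_value_iter_poly[OF a_nonzero two_nonzero assms(3)] orbit_add_nonzero assms(1)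
  by fastforce

end

section \<open>The gradient of \<open>F(U,W) + F(V,W)\<close>\<close>

definition eval2 :: "'a::comm_ring_1 poly poly \<Rightarrow> 'a \<Rightarrow> 'a \<Rightarrow> 'a" where
  "eval2 P u w = poly (map_poly (\<lambda>q. poly q u) P) w"

lemma eval2_0 [simp]: "eval2 0 u w = 0"
  by (simp add: eval2_def)

lemma eval2_add: "eval2 (P + Q) u w = eval2 P u w + eval2 Q u w"
  by (simp add: eval2_def map_poly_add)

lemma eval2_sum: "eval2 (sum P A) u w = (\<Sum>x\<in>A. eval2 (P x) u w)"
  by (induction A rule: infinite_finite_induct) (simp_all add: eval2_add)

lemma eval2_monom: "eval2 (monom q m) u w = poly q u * w ^ m"
  by (simp add: eval2_def map_poly_monom poly_monom)

lemma eval3_add: "eval3 (P + Q) u v w = eval3 P u v w + eval3 Q u v w"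
  by (simp add: eval3_def map_poly_add)

lemma eval3_lift_UW: "eval3 (lift_UW P) u v w = eval2 P u w"
  by (simp add: eval3_def lift_UW_def eval2_def map_poly_map_poly o_def map_poly_pCons)

lemma eval3_lift_VW: "eval3 (lift_VW P) u v w = eval2 P v w"
  by (simp add: eval3_def lift_VW_def eval2_def map_poly_map_poly o_def map_poly_pCons)

lemma dU_add: "dU (P + Q) = dU P + dU Q"
  by (simp add: dU_def map_poly_add pderiv_add)

lemma dV_add: "dV (P + Q) = dV P + dV Q"
  by (simp add: dV_def map_poly_add pderiv_add)

lemma dW_add: "dW (P + Q) = dW P + dW Q"
  by (simp add: dW_def pderiv_add)

lemma dU_lift_UW: "dU (lift_UW P) = lift_UW (map_poly pderiv P)"
  by (simp add: dU_def lift_UW_def map_poly_map_poly o_def map_poly_pCons)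

lemma dU_lift_VW: "dU (lift_VW P) = 0"
  by (intro poly_eqI) (simp add: dU_def lift_VW_def coeff_map_poly map_poly_map_poly o_def
      pderiv_pCons poly_eq_iff)

lemma dV_lift_UW: "dV (lift_UW P) = 0"
  by (rule poly_eqI) (simp add: dV_def lift_UW_def coeff_map_poly)

lemma dV_lift_VW: "dV (lift_VW P) = lift_VW (map_poly pderiv P)"
  by (simp add: dV_def lift_VW_def map_poly_map_poly o_def pderiv_map_poly of_nat_poly)

lemma dW_lift_UW: "dW (lift_UW P) = lift_UW (pderiv P)"
  by (simp add: dW_def lift_UW_def pderiv_map_poly of_nat_poly)

lemma dW_lift_VW: "dW (lift_VW P) = lift_VW (pderiv P)"
proof -
  have "map_poly (\<lambda>c. [:c:]) (of_nat n * q) = of_nat n * map_poly (\<lambda>c. [:c:]) q" for n and q :: "'a poly"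
    by (simp add: of_nat_poly map_poly_smult flip: smult_conv_map_poly)
  then show ?thesis
    by (simp add: dW_def lift_VW_def pderiv_map_poly of_nat_poly)
qed

lemma eval3_gradient_sum_form:
  "eval3 (dU (sum_form D p)) u v w = eval2 (map_poly pderiv (homog D p)) u w"
  "eval3 (dV (sum_form D p)) u v w = eval2 (map_poly pderiv (homog D p)) v w"
  "eval3 (dW (sum_form D p)) u v w = eval2 (pderiv (homog D p)) u w + eval2 (pderiv (homog D p)) v w"
  by (simp_all add: sum_form_def dU_add dV_add dW_add dU_lift_UW dU_lift_VW dV_lift_UW dV_lift_VW
      dW_lift_UW dW_lift_VW eval3_add eval3_lift_UW eval3_lift_VW)

lemma eval2_homog: "eval2 (homog D p) u w = (\<Sum>k\<le>D. coeff p k * u ^ k * w ^ (D - k))"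
  by (simp add: homog_def eval2_sum eval2_monom poly_monom)

lemma eval2_dU_homog:
  "eval2 (map_poly pderiv (homog D p)) u w = (\<Sum>k\<le>D. of_nat k * coeff p k * u ^ (k - 1) * w ^ (D - k))"
  by (simp add: homog_def map_poly_sum pderiv_add eval2_sum map_poly_monom pderiv_monom eval2_monom
      poly_monom)

lemma eval2_dW_homog:
  "eval2 (pderiv (homog D p)) u w = (\<Sum>k\<le>D. of_nat (D - k) * coeff p k * u ^ k * w ^ (D - k - 1))"
  by (simp add: homog_def pderiv_sum eval2_sum pderiv_monom eval2_monom poly_monom mult.assoc)

lemma eval2_dU_homog_Suc:
  "eval2 (map_poly pderiv (homog (Suc D) p)) u w = eval2 (homog D (pderiv p)) u w"
  unfolding eval2_dU_homog eval2_homog sum.atMost_Suc_shift by (simp add: coeff_pderiv mult.assoc)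

lemma eval2_homog_at_zero: "eval2 (homog D p) u 0 = coeff p D * u ^ D"
  by (simp add: eval2_homog power_0_left if_distrib sum.If_cases)

lemma eval2_dU_homog_at_zero:
  "eval2 (map_poly pderiv (homog D p)) u 0 = of_nat D * coeff p D * u ^ (D - 1)"
proof (cases D)
  case (Suc D')
  then show ?thesis
    by (simp add: eval2_dU_homog_Suc eval2_homog_at_zero coeff_pderiv del: of_nat_Suc)
qed (simp add: eval2_dU_homog)

lemma degree_pderiv_le: "degree (pderiv p) \<le> degree p - 1"
  by (intro degree_le) (auto simp: coeff_pderiv coeff_eq_0)

lemma eval2_homog_dehomogenize:
  fixes u w :: "'k::field"
  assumes "w \<noteq> 0" "degree p \<le> D"
  shows "eval2 (homog D p) u w = w ^ D * poly p (u / w)"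
proof -
  have "coeff p k * u ^ k * w ^ (D - k) = w ^ D * (coeff p k * (u / w) ^ k)" if k: "k \<in> {..D}" for k
  proof -
    obtain m where "D = k + m"
      using k le_Suc_ex by auto
    then show ?thesis
      using assms(1) by (simp add: power_add power_divide)
  qed
  then have "eval2 (homog D p) u w = w ^ D * (\<Sum>k\<le>D. coeff p k * (u / w) ^ k)"
    unfolding eval2_homog sum_distrib_left by (rule sum.cong[OF refl])
  also have "(\<Sum>k\<le>D. coeff p k * (u / w) ^ k) = poly (\<Sum>k\<le>D. monom (coeff p k) k) (u / w)"
    by (simp add: poly_sum poly_monom)
  finally show ?thesis
    by (simp only: poly_as_sum_of_monoms'[OF assms(2)])
qed

lemma eval2_dU_homog_dehomogenize:
  fixes u w :: "'k::field"
  assumes "w \<noteq> 0" "degree p \<le> D"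
  shows "eval2 (map_poly pderiv (homog D p)) u w = w ^ (D - 1) * poly (pderiv p) (u / w)"
proof (cases D)
  case 0
  with assms(2) show ?thesis
    by (auto simp: eval2_dU_homog elim: degree_eq_zeroE)
next
  case (Suc D')
  have "degree (pderiv p) \<le> D'"
    using degree_pderiv_le[of p] assms(2) Suc by linarith
  then show ?thesis
    using Suc by (simp add: eval2_dU_homog_Suc eval2_homog_dehomogenize[OF assms(1)])
qed

lemma euler_homog:
  "u * eval2 (map_poly pderiv (homog D p)) u w + w * eval2 (pderiv (homog D p)) u w
     = of_nat D * eval2 (homog D p) u w"
proof -
  have "u * (of_nat k * coeff p k * u ^ (k - 1) * w ^ (D - k))
        + w * (of_nat (D - k) * coeff p k * u ^ k * w ^ (D - k - 1))
      = of_nat D * (coeff p k * u ^ k * w ^ (D - k))" if k: "k \<in> {..D}" for k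
  proof -
    have u_power: "u * (of_nat k * u ^ (k - 1)) = of_nat k * u ^ k"
      by (cases k) auto
    have w_power: "w * (of_nat (D - k) * w ^ (D - k - 1)) = of_nat (D - k) * w ^ (D - k)"
      by (cases "D - k") auto
    have "u * (of_nat k * coeff p k * u ^ (k - 1) * w ^ (D - k))
          + w * (of_nat (D - k) * coeff p k * u ^ k * w ^ (D - k - 1))
        = coeff p k * w ^ (D - k) * (u * (of_nat k * u ^ (k - 1)))
          + coeff p k * u ^ k * (w * (of_nat (D - k) * w ^ (D - k - 1)))"
      by (simp only: ac_simps)
    also have "\<dots> = (of_nat k + of_nat (D - k)) * (coeff p k * u ^ k * w ^ (D - k))"
      unfolding u_power w_power by (simp add: algebra_simps)
    also have "of_nat k + of_nat (D - k) = (of_nat D :: 'a)"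
      using k by (simp flip: of_nat_add)
    finally show ?thesis .
  qed
  note term_identity = this
  have "u * eval2 (map_poly pderiv (homog D p)) u w + w * eval2 (pderiv (homog D p)) u w
      = (\<Sum>k\<le>D. u * (of_nat k * coeff p k * u ^ (k - 1) * w ^ (D - k))
          + w * (of_nat (D - k) * coeff p k * u ^ k * w ^ (D - k - 1)))"
    by (simp add: eval2_dU_homog eval2_dW_homog sum_distrib_left sum.distrib)
  also have "\<dots> = (\<Sum>k\<le>D. of_nat D * (coeff p k * u ^ k * w ^ (D - k)))"
    by (rule sum.cong[OF refl]) (rule term_identity)
  also have "\<dots> = of_nat D * eval2 (homog D p) u w"
    by (simp add: eval2_homog sum_distrib_left)
  finally show ?thesis .
qed

lemma sum_form_gradient_nonzero:
  fixes g :: "'k::field poly" and u v w :: 'k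
  assumes deg: "degree g = D" and D_nonzero: "(of_nat D :: 'k) \<noteq> 0"
    and critical_values: "\<And>x y. poly (pderiv g) x = 0 \<Longrightarrow> poly (pderiv g) y = 0 \<Longrightarrow> poly g x + poly g y \<noteq> 0"
    and nonzero: "(u, v, w) \<noteq> (0, 0, 0)"
  shows "\<not> (eval3 (dU (sum_form D g)) u v w = 0 \<and> eval3 (dV (sum_form D g)) u v w = 0 \<and>
            eval3 (dW (sum_form D g)) u v w = 0)"
proof
  assume "eval3 (dU (sum_form D g)) u v w = 0 \<and> eval3 (dV (sum_form D g)) u v w = 0 \<and>
            eval3 (dW (sum_form D g)) u v w = 0"
  then have dU0: "eval2 (map_poly pderiv (homog D g)) u w = 0"
    and dV0: "eval2 (map_poly pderiv (homog D g)) v w = 0"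
    and dW0: "eval2 (pderiv (homog D g)) u w + eval2 (pderiv (homog D g)) v w = 0"
    by (simp_all add: eval3_gradient_sum_form)
  have "D \<noteq> 0"
    using D_nonzero by (intro notI) simp
  with deg have lead: "coeff g D \<noteq> 0"
    by (metis degree_0 leading_coeff_neq_0)
  show False
  proof (cases "w = 0")
    case True
    with dU0 dV0 lead D_nonzero have "u = 0" "v = 0"
      by (simp_all add: eval2_dU_homog_at_zero)
    with True nonzero show False
      by simp
  next
    case False
    from dU0 dV0 False have "poly (pderiv g) (u / w) = 0" "poly (pderiv g) (v / w) = 0"
      by (simp_all add: eval2_dU_homog_dehomogenize[OF False] deg)
    then have sum_nonzero: "poly g (u / w) + poly g (v / w) \<noteq> 0"
      by (rule critical_values)
    have "w * eval2 (pderiv (homog D g)) x w = of_nat D * (w ^ D * poly g (x / w))"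
      if "eval2 (map_poly pderiv (homog D g)) x w = 0" for x
      using euler_homog[of x D g w] that eval2_homog_dehomogenize[OF False, of g D x] deg by simp
    from this[OF dU0] this[OF dV0] have "of_nat D * w ^ D * (poly g (u / w) + poly g (v / w))
        = w * (eval2 (pderiv (homog D g)) u w + eval2 (pderiv (homog D g)) v w)"
      by (simp add: algebra_simps)
    with dW0 D_nonzero False sum_nonzero show False
      by simp
  qed
qed

section \<open>Substituting \<open>aX\<^sup>2 + c\<close> into an irreducible polynomial\<close>

definition mirror_poly :: "'a::comm_ring_1 poly \<Rightarrow> 'a poly" where
  "mirror_poly p = pcompose p [:0, -1:]"

lemma mirror_poly_mirror_poly [simp]: "mirror_poly (mirror_poly p) = p"
  by (simp add: mirror_poly_def pcompose_assoc [symmetric] pcompose_pCons)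

lemma mirror_poly_mult: "mirror_poly (p * q) = mirror_poly p * mirror_poly q"
  by (simp add: mirror_poly_def pcompose_mult)

lemma mirror_poly_unit: "is_unit (p :: 'a::idom_divide poly) \<Longrightarrow> mirror_poly p = p"
  by (auto simp: is_unit_poly_iff mirror_poly_def)

lemma poly_mirror_poly_0 [simp]: "poly (mirror_poly p) 0 = poly p 0"
  by (simp add: mirror_poly_def poly_pcompose)

lemma mirror_poly_pcompose_even: "mirror_poly (pcompose q [:c, 0, a:]) = pcompose q [:c, 0, a:]"
  by (simp add: mirror_poly_def pcompose_assoc [symmetric] pcompose_pCons)

lemma prime_elem_mirror_poly:
  fixes p :: "'a::idom_divide poly"
  assumes "prime_elem p"
  shows "prime_elem (mirror_poly p)"
proof (rule prime_elemI)
  show "mirror_poly p \<noteq> 0" "\<not> is_unit (mirror_poly p)"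
    using assms mirror_poly_mirror_poly[of p] mirror_poly_unit[of "mirror_poly p"]
    by (auto simp: prime_elem_def mirror_poly_def)
next
  fix q r assume "mirror_poly p dvd q * r"
  then have "p dvd mirror_poly q * mirror_poly r"
    by (metis dvd_def mirror_poly_mirror_poly mirror_poly_mult)
  with assms have "p dvd mirror_poly q \<or> p dvd mirror_poly r"
    by (simp add: prime_elem_dvd_mult_iff)
  then show "mirror_poly p dvd q \<or> mirror_poly p dvd r"
    by (metis dvd_def mirror_poly_mirror_poly mirror_poly_mult)
qed

lemma mirror_poly_eq_mult_unit:
  fixes p u :: "'a::idom_divide poly"
  assumes "(2::'a) \<noteq> 0" "p \<noteq> 0" "mirror_poly p = p * u"
  shows "u = 1 \<or> u = -1"
proof -
  have "p = mirror_poly p * mirror_poly u"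
    using arg_cong[OF assms(3), of mirror_poly] by (simp add: mirror_poly_mult)
  also have "\<dots> = p * (u * mirror_poly u)"
    using assms(3) by (simp add: mult.assoc)
  finally have "p * 1 = p * (u * mirror_poly u)"
    by simp
  then have "u * mirror_poly u = 1"
    using assms(2) mult_cancel_left by metis
  then have "u * u = 1"
    by (metis dvd_triv_left mirror_poly_unit)
  then have "(u - 1) * (u + 1) = 0"
    by (simp add: algebra_simps)
  then show ?thesis
    by (simp add: eq_neg_iff_add_eq_0)
qed

lemma mirror_invariant_pcompose_square:
  fixes H :: "'a::idom_divide poly"
  assumes "(2::'a) \<noteq> 0" "mirror_poly H = H"
  shows "\<exists>H0. H = pcompose H0 [:0, 0, 1:]"
  using assms(2)
proof (induction "degree H" arbitrary: H rule: less_induct)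
  case less
  obtain h0 h1 H2 where H: "H = pCons h0 (pCons h1 H2)"
    by (metis pCons_cases)
  have "mirror_poly H = pCons h0 (pCons (-h1) (mirror_poly H2))"
    by (simp add: H mirror_poly_def pcompose_pCons)
  with less.prems have "h1 = - h1" "mirror_poly H2 = H2"
    by (simp_all add: H)
  then have "h1 = 0"
    using assms(1) by (metis add_eq_0_iff2 mult_2 mult_eq_0_iff)
  show ?case
  proof (cases "H2 = 0")
    case True
    then show ?thesis
      by (intro exI[of _ "[:h0:]"]) (simp add: H \<open>h1 = 0\<close>)
  next
    case False
    then have "degree H2 < degree H"
      by (simp add: H)
    with less.hyps \<open>mirror_poly H2 = H2\<close> obtain H0 where "H2 = pcompose H0 [:0, 0, 1:]"
      by blast
    then show ?thesis
      by (intro exI[of _ "pCons h0 H0"]) (simp add: H \<open>h1 = 0\<close> pcompose_pCons)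
  qed
qed

lemma mirror_invariant_pcompose_quadratic:
  fixes H :: "'a::idom_divide poly"
  assumes "(2::'a) \<noteq> 0" "a dvd 1" "mirror_poly H = H"
  shows "\<exists>M. H = pcompose M [:c, 0, a:]"
proof -
  obtain H0 where H0: "H = pcompose H0 [:0, 0, 1:]"
    using mirror_invariant_pcompose_square[OF assms(1,3)] by blast
  obtain b where "1 = a * b"
    using assms(2) by (elim dvdE)
  then have "pcompose [:- b * c, b:] [:c, 0, a:] = [:0, 0, 1:]"
    by (simp add: pcompose_pCons algebra_simps)
  then show ?thesis
    by (intro exI[of _ "pcompose H0 [:- b * c, b:]"]) (simp add: H0 flip: pcompose_assoc)
qed

lemma pcompose_quadratic_dvd_cancel:
  fixes M Q :: "'a::idom_divide poly"
  assumes "(2::'a) \<noteq> 0" "a dvd 1"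
    and dvd: "pcompose M [:c, 0, a:] dvd pcompose Q [:c, 0, a:]"
  shows "M dvd Q"
proof -
  define S where "S = [:c, 0, a:]"
  have "a \<noteq> 0"
    using assms(2) by auto
  then have degree_S: "degree S = 2"
    by (simp add: S_def)
  obtain T where T: "pcompose Q S = pcompose M S * T"
    using dvd unfolding S_def by blast
  show ?thesis
  proof (cases "M = 0")
    case True
    with T degree_S have "Q = 0"
      by (simp add: pcompose_eq_0_iff)
    then show ?thesis
      by simp
  next
    case False
    with degree_S have MS: "pcompose M S \<noteq> 0"
      by (simp add: pcompose_eq_0_iff)
    have "pcompose M S * mirror_poly T = pcompose M S * T"
      using arg_cong[OF T, of mirror_poly] T
      by (simp add: mirror_poly_mult mirror_poly_pcompose_even S_def)
    with MS have "mirror_poly T = T"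
      by simp
    then obtain T' where T': "T = pcompose T' S"
      using mirror_invariant_pcompose_quadratic[OF assms(1,2)] unfolding S_def by blast
    have "pcompose (Q - M * T') S = 0"
      using T T' by (simp add: pcompose_diff pcompose_mult)
    with degree_S have "Q = M * T'"
      by (simp add: pcompose_eq_0_iff)
    then show ?thesis
      by simp
  qed
qed

lemma mirror_invariant_factor_of_pcompose_quadratic:
  fixes N Q :: "'a::idom_divide poly"
  assumes "(2::'a) \<noteq> 0" "a dvd 1" "irreducible Q"
    and "mirror_poly N = N" "N dvd pcompose Q [:c, 0, a:]" "\<not> is_unit N"
  shows "\<exists>v. is_unit v \<and> pcompose Q [:c, 0, a:] = v * N"
proof -
  obtain M where M: "N = pcompose M [:c, 0, a:]"
    using mirror_invariant_pcompose_quadratic[OF assms(1,2,4)] by blast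
  with assms obtain v where v: "Q = M * v"
    by (metis pcompose_quadratic_dvd_cancel dvdE)
  have "\<not> is_unit M"
    using M assms(6) by (auto simp: is_unit_poly_iff)
  with v assms(3) have "is_unit v"
    using irreducibleD by blast
  moreover from this have "pcompose v [:c, 0, a:] = v"
    by (auto simp: is_unit_poly_iff)
  ultimately show ?thesis
    using M v by (intro exI[of _ v]) (simp add: pcompose_mult mult.commute)
qed

text \<open>A factor of \<open>R = Q(aX\<^sup>2 + c)\<close> invariant under \<open>X \<mapsto> -X\<close> has the form \<open>M(aX\<^sup>2 + c)\<close> with
  \<open>M\<close> dividing \<open>Q\<close>, hence is associated to \<open>R\<close>.\<close>
lemma prime_factor_of_pcompose_quadratic_cases:
  fixes Q H :: "'a::idom_divide poly"
  assumes two: "(2::'a) \<noteq> 0" and "a dvd 1" "irreducible Q"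
    and "prime_elem H" "H dvd pcompose Q [:c, 0, a:]"
  obtains v where "is_unit v" "pcompose Q [:c, 0, a:] = v * H"
    | "poly H 0 = 0"
    | v where "is_unit v" "pcompose Q [:c, 0, a:] = v * (H * mirror_poly H)"
proof -
  define R where "R = pcompose Q [:c, 0, a:]"
  have "H \<noteq> 0" "\<not> is_unit H"
    using \<open>prime_elem H\<close> by (auto simp: prime_elem_def)
  obtain K where K: "R = H * K"
    using \<open>H dvd pcompose Q [:c, 0, a:]\<close> unfolding R_def by blast
  have R_mirror: "mirror_poly R = R"
    by (simp add: R_def mirror_poly_pcompose_even)
  note associated_to_R = mirror_invariant_factor_of_pcompose_quadratic[OF two assms(2,3)]
  show ?thesis
  proof (cases "H dvd mirror_poly H")
    case True
    then obtain u where "mirror_poly H = H * u"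
      by blast
    then consider "mirror_poly H = H" | "mirror_poly H = - H"
      using mirror_poly_eq_mult_unit[OF two \<open>H \<noteq> 0\<close>] by force
    then show ?thesis
    proof cases
      case 1
      then show ?thesis
        using associated_to_R assms(5) \<open>\<not> is_unit H\<close> that(1) by blast
    next
      case 2
      then have "poly H 0 = - poly H 0"
        by (metis poly_mirror_poly_0 poly_minus)
      with two have "poly H 0 = 0"
        by (metis add_eq_0_iff2 mult_2 mult_eq_0_iff)
      then show ?thesis
        by (rule that(2))
    qed
  next
    case False
    have "mirror_poly H dvd H * K"
      using R_mirror K by (metis dvd_def mirror_poly_mult)
    moreover have "\<not> mirror_poly H dvd H"
      using False by (metis dvd_def mirror_poly_mirror_poly mirror_poly_mult)
    ultimately obtain L where "K = mirror_poly H * L"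
      using prime_elem_mirror_poly[OF \<open>prime_elem H\<close>] by (metis prime_elem_dvd_mult_iff dvdE)
    with K have "H * mirror_poly H dvd pcompose Q [:c, 0, a:]"
      by (simp add: R_def mult.assoc)
    moreover have "mirror_poly (H * mirror_poly H) = H * mirror_poly H"
      by (simp add: mirror_poly_mult mult.commute)
    moreover have "\<not> is_unit (H * mirror_poly H)"
      using \<open>\<not> is_unit H\<close> is_unit_mult_iff by blast
    ultimately show ?thesis
      using associated_to_R that(3) by blast
  qed
qed

lemma irreducible_pcompose_quadratic:
  fixes Q :: "'k::{field,factorial_ring_gcd,semiring_gcd_mult_normalize} poly poly" and a c :: "'k poly"
  assumes irreducible: "irreducible Q" and "(2::'k) \<noteq> 0" "a dvd 1"
    and not_square: "\<not> (\<exists>\<kappa> h. poly Q c = smult \<kappa> (h * h))"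
  shows "irreducible (pcompose Q [:c, 0, a:])"
proof (cases "degree Q = 0")
  case True
  then show ?thesis
    using irreducible by (metis degree_0_id pcompose_const)
next
  case False
  define R where "R = pcompose Q [:c, 0, a:]"
  have two: "(2::'k poly) \<noteq> 0"
    using assms(2) by (metis of_nat_numeral of_nat_poly pCons_eq_0_iff)
  have "degree [:c, 0, a:] = 2"
    using assms(3) by auto
  then have "degree R = degree Q * 2"
    by (simp only: R_def degree_pcompose)
  with False have "\<not> is_unit R" "R \<noteq> 0"
    by (auto simp: is_unit_poly_iff)
  then obtain H where "H dvd R" "prime_elem H"
    using prime_divisor_exists prime_imp_prime_elem by blast
  have R_0: "poly R 0 = poly Q c"
    by (simp add: R_def poly_pcompose)
  from \<open>H dvd R\<close> have "H dvd pcompose Q [:c, 0, a:]"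
    by (simp add: R_def)
  with prime_factor_of_pcompose_quadratic_cases[OF two assms(3) irreducible \<open>prime_elem H\<close>]
  consider (associated) v where "is_unit v" "R = v * H"
    | (root) "poly H 0 = 0"
    | (square) v where "is_unit v" "R = v * (H * mirror_poly H)"
    unfolding R_def by metis
  then show ?thesis
  proof cases
    case associated
    then show ?thesis
      using \<open>prime_elem H\<close> prime_elem_imp_irreducible irreducible_mult_unit_left
      unfolding R_def by metis
  next
    case root
    with \<open>H dvd R\<close> R_0 have "poly Q c = smult 0 (0 * 0)"
      by (auto elim: dvdE)
    with not_square show ?thesis
      by blast
  next
    case (square v)
    moreover obtain k where "poly v 0 = [:k:]"
      using \<open>is_unit v\<close> by (auto simp: is_unit_poly_iff)
    ultimately have "poly Q c = smult k (poly H 0 * poly H 0)"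
      using R_0 by simp
    with not_square show ?thesis
      by blast
  qed
qed

section \<open>Application to the iterates \<open>f\<^sup>j\<close>\<close>

context quadratic_orbit
begin

lemma sum_form_iterate_gradient_nonzero:
  assumes "j < r" "(u, v, w) \<noteq> (0, 0, 0)"
  shows "\<not> (eval3 (dU (sum_form (2 ^ j) (iter_poly [:c, 0, a:] j))) u v w = 0 \<and>
            eval3 (dV (sum_form (2 ^ j) (iter_poly [:c, 0, a:] j))) u v w = 0 \<and>
            eval3 (dW (sum_form (2 ^ j) (iter_poly [:c, 0, a:] j))) u v w = 0)"
proof (rule sum_form_gradient_nonzero)
  show "degree (iter_poly [:c, 0, a:] j) = 2 ^ j"
    using a_nonzero by (rule degree_iter_poly_quadratic)
  show "(of_nat (2 ^ j) :: 'k) \<noteq> 0"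
    using two_nonzero by simp
qed (use assms critical_values_add_nonzero in auto)

end

locale quadratic_orbit_closed = quadratic_orbit a c r
  for a c :: "'k::{alg_closed_field,factorial_ring_gcd,semiring_gcd_mult_normalize}" and r
begin

lemma iterate_plus_orbit_not_square:
  assumes "1 \<le> m" "m < r" "j < r"
  shows "\<not> (\<exists>\<kappa> h. iter_poly [:c, 0, a:] j + [:orbit m:] = smult \<kappa> (h * h))"
proof
  assume "\<exists>\<kappa> h. iter_poly [:c, 0, a:] j + [:orbit m:] = smult \<kappa> (h * h)"
  then obtain \<kappa> h where square: "iter_poly [:c, 0, a:] j + [:orbit m:] = smult \<kappa> (h * h)"
    by blast
  have degree_square: "degree (iter_poly [:c, 0, a:] j + [:orbit m:]) = 2 ^ j"
    using a_nonzero by (simp add: degree_iter_poly_quadratic degree_add_eq_left)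
  then have "smult \<kappa> (h * h) \<noteq> 0"
    by (metis square degree_0 power_not_zero zero_neq_numeral)
  then have "\<kappa> \<noteq> 0" "h \<noteq> 0"
    by auto
  with square degree_square have "degree h + degree h = 2 ^ j"
    by (simp add: degree_mult_eq)
  then obtain x where "poly h x = 0"
    using alg_closed_imp_poly_has_root by force
  then have "poly (iter_poly [:c, 0, a:] j) x + orbit m = 0"
    using arg_cong[OF square, of "\<lambda>p. poly p x"] by simp
  moreover have "pderiv (iter_poly [:c, 0, a:] j) = smult \<kappa> (h * pderiv h + h * pderiv h)"
    using arg_cong[OF square, of pderiv] by (simp add: pderiv_add pderiv_smult pderiv_mult)
  with \<open>poly h x = 0\<close> have "poly (pderiv (iter_poly [:c, 0, a:] j)) x = 0"
    by simp
  then obtain m' where "1 \<le> m'" "m' \<le> j" "poly (iter_poly [:c, 0, a:] j) x = orbit m'"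
    using critical_value_iter_poly[OF a_nonzero two_nonzero] by blast
  ultimately show False
    using orbit_add_nonzero[of m' m] assms by simp
qed

lemma irreducible_iterate_sum:
  assumes "k \<le> j" "j < r"
  shows "irreducible ([:iter_poly [:c, 0, a:] j:] + map_poly (\<lambda>x. [:x:]) (iter_poly [:c, 0, a:] k))"
  using assms(1)
proof (induction k)
  case 0
  then show ?case
    using irreducible_linear_poly[of "1::'k poly" "iter_poly [:c, 0, a:] j"]
    by (simp add: map_poly_pCons flip: one_pCons)
next
  case (Suc k)
  define Q where "Q = [:iter_poly [:c, 0, a:] j:] + map_poly (\<lambda>x. [:x:]) (iter_poly [:c, 0, a:] k)"
  have "pcompose Q [:[:c:], 0, [:a:]:]
      = [:iter_poly [:c, 0, a:] j:] + map_poly (\<lambda>x. [:x:]) (iter_poly [:c, 0, a:] (Suc k))"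
    by (simp add: Q_def iter_poly_Suc_right pcompose_add map_poly_pcompose map_poly_pCons)
  moreover have Q_at_c: "poly Q [:c:] = iter_poly [:c, 0, a:] j + [:orbit (Suc k):]"
    using poly_map_poly_hom[of "\<lambda>x. [:x:]" "iter_poly [:c, 0, a:] k" c]
    by (simp add: Q_def iter_poly_Suc_right poly_pcompose)
  moreover have "irreducible (pcompose Q [:[:c:], 0, [:a:]:])"
  proof (rule irreducible_pcompose_quadratic)
    show "irreducible Q"
      using Suc by (simp add: Q_def)
    show "\<not> (\<exists>\<kappa> h. poly Q [:c:] = smult \<kappa> (h * h))"
      using iterate_plus_orbit_not_square[of "Suc k" j] Suc.prems assms(2) Q_at_c by simp
  qed (use two_nonzero a_nonzero in \<open>auto simp: is_unit_const_poly_iff dvd_field_iff\<close>)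
  ultimately show ?case
    by simp
qed

end

lemma two_neq_zero_if_CHAR_neq_2:
  assumes "CHAR('a::{semiring_1,zero_neq_one}) \<noteq> 2"
  shows "(2::'a) \<noteq> 0"
proof
  assume "(2::'a) = 0"
  then have "CHAR('a) dvd 2"
    by (metis of_nat_eq_0_iff_char_dvd of_nat_numeral)
  then have "CHAR('a) = 1 \<or> CHAR('a) = 2"
    using two_is_prime_nat prime_nat_iff by blast
  with assms show False
    by simp
qed

theorem mainTheorem6:
  fixes a c :: "'a::{field,finite}" and r :: nat
  assumes "CHAR('a) \<noteq> 2" and "a \<noteq> 0" and "r \<ge> 1"
    and "\<forall>i j. i < j \<and> j \<le> r \<longrightarrow>
           poly (iter_poly [:c, 0, a:] i) 0 \<noteq> poly (iter_poly [:c, 0, a:] j) 0"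
  shows "\<forall>j < r.
     (\<forall>u v w :: 'a alg_closure. (u, v, w) \<noteq> (0, 0, 0) \<longrightarrow>
        \<not> (eval3 (dU (sum_form (2 ^ j) (map_poly to_ac (iter_poly [:c, 0, a:] j)))) u v w = 0 \<and>
           eval3 (dV (sum_form (2 ^ j) (map_poly to_ac (iter_poly [:c, 0, a:] j)))) u v w = 0 \<and>
           eval3 (dW (sum_form (2 ^ j) (map_poly to_ac (iter_poly [:c, 0, a:] j)))) u v w = 0))
     \<and> irreducible (biv_sum (map_poly to_ac (iter_poly [:c, 0, a:] j)))"
proof -
  have map_iterate: "map_poly to_ac (iter_poly [:c, 0, a:] j) = iter_poly [:to_ac c, 0, to_ac a:] j" for j
    by (simp add: map_poly_iter_poly map_poly_pCons)
  have orbit_to_ac: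
    "poly (iter_poly [:to_ac c, 0, to_ac a:] i) 0 = to_ac (poly (iter_poly [:c, 0, a:] i) 0)" for i
    using poly_map_poly_hom[of to_ac "iter_poly [:c, 0, a:] i" 0] by (simp add: map_iterate)
  interpret quadratic_orbit_closed "to_ac a" "to_ac c" r
  proof
    show "to_ac a \<noteq> 0" "(2 :: 'a alg_closure) \<noteq> 0"
      using assms(2) two_neq_zero_if_CHAR_neq_2[OF assms(1)] by (simp_all flip: to_ac_numeral)
    show "poly (iter_poly [:to_ac c, 0, to_ac a:] i) 0 \<noteq> poly (iter_poly [:to_ac c, 0, to_ac a:] j) 0"
      if "i < j" "j \<le> r" for i j
      using assms(4) that by (simp add: orbit_to_ac)
  qed
  show ?thesis
    unfolding map_iterate biv_sum_def
    using sum_form_iterate_gradient_nonzero irreducible_iterate_sum[OF order_refl] by blast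
qed

end
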